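(* Let $k$ be a positive integer and let $T$ be an $n$-vertex tournament with $\Delta^+(T)-\delta^+(T)\le \frac{n}{10k}-k^2$. Then $T$ contains a $1$-subdivision of $\vec{K}_k$.
   Context: A tournament is a digraph in which for every two distinct vertices exactly one of the two possible arcs between them is present. $\Delta^+(T)$ and $\delta^+(T)$ denote the maximum and minimum out-degree of $T$. $\vec{K}_k$ is the complete digraph on $k$ vertices, having all $k(k-1)$ arcs $uv$ for ordered pairs of distinct vertices. The $1$-subdivision of a digraph is obtained by replacing every arc $uv$ by a directed path $u\to w\to v$ of length two through a new vertex $w$ (distinct new vertices for distinct arcs); $T$ contains it if some subgraph of $T$ is isomorphic to it. *)

theory Defs
  imports Complex_Main
begin

definition tournament :: "'a set \<Rightarrow> ('a \<Rightarrow> 'a \<Rightarrow> bool) \<Rightarrow> bool" where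
  "tournament V A \<longleftrightarrow> finite V \<and>
     (\<forall>u v. A u v \<longrightarrow> u \<in> V \<and> v \<in> V) \<and>
     (\<forall>v. \<not> A v v) \<and>
     (\<forall>u\<in>V. \<forall>v\<in>V. u \<noteq> v \<longrightarrow> (A u v \<longleftrightarrow> \<not> A v u))"

definition outdeg :: "'a set \<Rightarrow> ('a \<Rightarrow> 'a \<Rightarrow> bool) \<Rightarrow> 'a \<Rightarrow> nat" where
  "outdeg V A v = card {w \<in> V. A v w}"

definition max_outdeg :: "'a set \<Rightarrow> ('a \<Rightarrow> 'a \<Rightarrow> bool) \<Rightarrow> nat" where
  "max_outdeg V A = (if V = {} then 0 else Max (outdeg V A ` V))"

definition min_outdeg :: "'a set \<Rightarrow> ('a \<Rightarrow> 'a \<Rightarrow> bool) \<Rightarrow> nat" where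
  "min_outdeg V A = (if V = {} then 0 else Min (outdeg V A ` V))"

text \<open>The digraph (V,A) contains a 1-subdivision of the complete digraph on k vertices:
  branch vertices f i (i < k) and, for each ordered pair (i,j) with i \<noteq> j, a subdivision
  vertex g (i,j), all pairwise distinct, with arcs f i \<rightarrow> g (i,j) \<rightarrow> f j.\<close>
definition contains_subdiv_complete :: "'a set \<Rightarrow> ('a \<Rightarrow> 'a \<Rightarrow> bool) \<Rightarrow> nat \<Rightarrow> bool" where
  "contains_subdiv_complete V A k \<longleftrightarrow>
     (let P = {(i, j). i < k \<and> j < k \<and> i \<noteq> j} in
      \<exists>f :: nat \<Rightarrow> 'a. \<exists>g :: nat \<times> nat \<Rightarrow> 'a.
        inj_on f {..<k} \<and> f ` {..<k} \<subseteq> V \<and>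
        inj_on g P \<and> g ` P \<subseteq> V \<and>
        f ` {..<k} \<inter> g ` P = {} \<and>
        (\<forall>(i, j) \<in> P. A (f i) (g (i, j)) \<and> A (g (i, j)) (f j)))"

end

theory Submission
  imports Defs
begin

text \<open>Call u and v t-linked if there are at least t directed 2-paths from u to v and at
  least t from v to u. For an arc uv, counting out-degrees shows that the 2-paths from v to u are
  at most D = \<Delta>+ - \<delta>+ fewer than those from u to v. Hence, for t = k^2 + k,
  a vertex v not t-linked to u has in-degree below t + D inside N+(u) or out-degree below t + D
  inside N-(u); since a tournament has at most 2s vertices of out-degree below s, every u
  fails to be linked to at most 4(t + D) vertices. The degree hypothesis gives
  (k - 1)(4(t + D) + 1) < n, so k pairwise linked branch vertices can be chosen greedily.
  Each ordered pair of them then has at least k^2 + k common 2-path midpoints, enough to pick the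
  k^2 - k subdivision vertices greedily, avoiding the branch vertices and each other.\<close>

lemma tournament_finite: "tournament V A \<Longrightarrow> finite V"
  unfolding tournament_def by blast

lemma tournament_asym:
  assumes "tournament V A" "A u v"
  shows "\<not> A v u"
  using assms unfolding tournament_def by metis

lemma tournament_total:
  assumes "tournament V A" "u \<in> V" "v \<in> V" "u \<noteq> v"
  shows "A u v \<or> A v u"
  using assms unfolding tournament_def by metis

lemma tournament_restrict:
  assumes "tournament V A" "W \<subseteq> V"
  shows "tournament W (\<lambda>x y. x \<in> W \<and> y \<in> W \<and> A x y)"
proof -
  have "finite W" using assms tournament_finite finite_subset by blast
  with assms show ?thesis unfolding tournament_def by blast
qed

lemma tournament_converse:
  assumes "tournament V A"
  shows "tournament V (\<lambda>x y. A y x)"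
  using assms unfolding tournament_def by metis

lemma tournament_sum_outdeg:
  assumes T: "tournament V A"
  shows "2 * (\<Sum>v\<in>V. outdeg V A v) = card V * (card V - 1)"
proof -
  have fin: "finite V" using T by (rule tournament_finite)
  have outdeg_sum: "outdeg V A v = (\<Sum>w\<in>V. of_bool (A v w))" for v
    using fin unfolding outdeg_def by (simp add: Int_def conj_commute)
  have pair: "of_bool (A v w) + of_bool (A w v) = (of_bool (v \<noteq> w) :: nat)"
    if "v \<in> V" "w \<in> V" for v w
  proof (cases "v = w")
    case True
    then show ?thesis using T unfolding tournament_def by simp
  next
    case False
    then show ?thesis
      using that tournament_total[OF T, of v w] tournament_asym[OF T, of v w] by auto
  qed
  have swap: "(\<Sum>v\<in>V. \<Sum>w\<in>V. of_bool (A w v)) = (\<Sum>v\<in>V. \<Sum>w\<in>V. (of_bool (A v w) :: nat))"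
    by (rule sum.swap)
  have "2 * (\<Sum>v\<in>V. outdeg V A v) = (\<Sum>v\<in>V. \<Sum>w\<in>V. of_bool (A v w) + of_bool (A w v))"
    unfolding outdeg_sum sum.distrib swap by simp
  also have "\<dots> = (\<Sum>v\<in>V. \<Sum>w\<in>V. of_bool (v \<noteq> w))"
    using pair by (intro sum.cong) auto
  also have "\<dots> = (\<Sum>v\<in>V. card V - 1)"
  proof (intro sum.cong refl)
    fix v assume "v \<in> V"
    then have "V \<inter> {w. v \<noteq> w} = V - {v}" by auto
    then show "(\<Sum>w\<in>V. of_bool (v \<noteq> w)) = card V - 1"
      using fin \<open>v \<in> V\<close> by simp
  qed
  finally show ?thesis by simp
qed

lemma tournament_card_low_outdeg:
  assumes T: "tournament V A"
  shows "card {v\<in>V. outdeg V A v < s} \<le> 2 * s"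
proof -
  define R where "R = {v\<in>V. outdeg V A v < s}"
  define B where "B = (\<lambda>x y. x \<in> R \<and> y \<in> R \<and> A x y)"
  have fin: "finite V" using T by (rule tournament_finite)
  have TR: "tournament R B"
    unfolding B_def R_def by (rule tournament_restrict[OF T]) auto
  have "outdeg R B v < s" if "v \<in> R" for v
  proof -
    have "outdeg R B v \<le> outdeg V A v"
      unfolding outdeg_def B_def R_def using fin by (intro card_mono) auto
    then show ?thesis using that unfolding R_def by simp
  qed
  then have "2 * (\<Sum>v\<in>R. outdeg R B v) \<le> 2 * (\<Sum>v\<in>R. s - 1)"
    by (intro mult_le_mono2 sum_mono) fastforce
  then have "card R * (card R - 1) \<le> card R * (2 * (s - 1))"
    unfolding tournament_sum_outdeg[OF TR] by simp
  moreover have "0 < s" if "R \<noteq> {}"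
    using that unfolding R_def by auto
  ultimately show ?thesis
    unfolding R_def[symmetric] by (cases "R = {}") auto
qed

lemma min_outdeg_le_outdeg:
  assumes "finite V" "v \<in> V"
  shows "min_outdeg V A \<le> outdeg V A v"
  using assms unfolding min_outdeg_def by auto

lemma outdeg_le_max_outdeg:
  assumes "finite V" "v \<in> V"
  shows "outdeg V A v \<le> max_outdeg V A"
  using assms unfolding max_outdeg_def by auto

lemma min_outdeg_le_max_outdeg:
  assumes "finite V"
  shows "min_outdeg V A \<le> max_outdeg V A"
proof (cases "V = {}")
  case True
  then show ?thesis unfolding min_outdeg_def max_outdeg_def by simp
next
  case False
  then obtain v where "v \<in> V" by blast
  then show ?thesis
    using min_outdeg_le_outdeg[OF assms] outdeg_le_max_outdeg[OF assms] le_trans by blast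
qed

definition midpoints :: "'a set \<Rightarrow> ('a \<Rightarrow> 'a \<Rightarrow> bool) \<Rightarrow> 'a \<Rightarrow> 'a \<Rightarrow> 'a set" where
  "midpoints V A u v = {w\<in>V. A u w \<and> A w v}"

lemma card_midpoints_le_reverse:
  assumes T: "tournament V A" and uv: "A u v"
  shows "card (midpoints V A u v) + min_outdeg V A \<le> card (midpoints V A v u) + max_outdeg V A"
proof -
  have fin: "finite V" using T by (rule tournament_finite)
  have "u \<in> V" "v \<in> V" using T uv unfolding tournament_def by blast+
  define Out where "Out = {w\<in>V. A u w}"
  have finOut: "finite Out" unfolding Out_def using fin by simp
  have mid_uv: "midpoints V A u v = {w\<in>Out. A w v}"
    unfolding midpoints_def Out_def by auto
  have "{w\<in>V. A v w} \<subseteq> {w\<in>Out. A v w} \<union> midpoints V A v u"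
    unfolding Out_def midpoints_def
    using tournament_total[OF T \<open>u \<in> V\<close>] tournament_asym[OF T uv] by blast
  then have "outdeg V A v \<le> card ({w\<in>Out. A v w} \<union> midpoints V A v u)"
    unfolding outdeg_def using finOut fin by (intro card_mono) (auto simp: midpoints_def)
  also have "\<dots> \<le> card {w\<in>Out. A v w} + card (midpoints V A v u)"
    by (rule card_Un_le)
  finally have "outdeg V A v \<le> card {w\<in>Out. A v w} + card (midpoints V A v u)" .
  moreover have "card {w\<in>Out. A v w} + card {w\<in>Out. A w v} \<le> card Out"
    using finOut tournament_asym[OF T]
    by (subst card_Un_disjoint[symmetric]) (auto intro: card_mono)
  moreover have "card Out \<le> max_outdeg V A"
    using outdeg_le_max_outdeg[OF fin \<open>u \<in> V\<close>] unfolding outdeg_def Out_def .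
  moreover have "min_outdeg V A \<le> outdeg V A v"
    using min_outdeg_le_outdeg[OF fin \<open>v \<in> V\<close>] .
  ultimately show ?thesis unfolding mid_uv by linarith
qed

definition linked :: "'a set \<Rightarrow> ('a \<Rightarrow> 'a \<Rightarrow> bool) \<Rightarrow> nat \<Rightarrow> 'a \<Rightarrow> 'a \<Rightarrow> bool" where
  "linked V A t u v \<longleftrightarrow> t \<le> card (midpoints V A u v) \<and> t \<le> card (midpoints V A v u)"

lemma linked_sym: "linked V A t u v \<Longrightarrow> linked V A t v u"
  unfolding linked_def by simp

lemma card_not_linked_le:
  assumes T: "tournament V A" and u: "u \<in> V"
  shows "card {v\<in>V. v \<noteq> u \<and> \<not> linked V A t u v} \<le> 4 * (t + (max_outdeg V A - min_outdeg V A))"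
proof -
  define D where "D = max_outdeg V A - min_outdeg V A"
  define Out where "Out = {w\<in>V. A u w}"
  define In where "In = {w\<in>V. A w u}"
  define B_Out where "B_Out = (\<lambda>x y. y \<in> Out \<and> x \<in> Out \<and> A y x)"
  define B_In where "B_In = (\<lambda>x y. x \<in> In \<and> y \<in> In \<and> A x y)"
  have fin: "finite V" using T by (rule tournament_finite)
  have D: "D + min_outdeg V A = max_outdeg V A"
    using min_outdeg_le_outdeg[OF fin u, of A] outdeg_le_max_outdeg[OF fin u, of A]
    unfolding D_def by linarith
  have T_Out: "tournament Out B_Out"
    unfolding B_Out_def by (rule tournament_converse[OF tournament_restrict[OF T]]) (auto simp: Out_def)
  have T_In: "tournament In B_In"
    unfolding B_In_def by (rule tournament_restrict[OF T]) (auto simp: In_def)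
  have outdeg_Out: "outdeg Out B_Out v = card (midpoints V A u v)" if "v \<in> Out" for v
  proof -
    have "{w\<in>Out. B_Out v w} = midpoints V A u v"
      using that unfolding B_Out_def midpoints_def Out_def by auto
    then show ?thesis unfolding outdeg_def by simp
  qed
  have outdeg_In: "outdeg In B_In v = card (midpoints V A v u)" if "v \<in> In" for v
  proof -
    have "{w\<in>In. B_In v w} = midpoints V A v u"
      using that unfolding B_In_def midpoints_def In_def by auto
    then show ?thesis unfolding outdeg_def by simp
  qed
  have "{v\<in>V. v \<noteq> u \<and> \<not> linked V A t u v}
      \<subseteq> {v\<in>Out. outdeg Out B_Out v < t + D} \<union> {v\<in>In. outdeg In B_In v < t + D}"
  proof (intro subsetI)
    fix v assume "v \<in> {v\<in>V. v \<noteq> u \<and> \<not> linked V A t u v}"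
    then have v: "v \<in> V" "v \<noteq> u" and not_linked: "\<not> linked V A t u v" by auto
    consider "A u v" | "A v u" using tournament_total[OF T u v(1)] v(2) by blast
    then show "v \<in> {v\<in>Out. outdeg Out B_Out v < t + D} \<union> {v\<in>In. outdeg In B_In v < t + D}"
    proof cases
      case 1
      then have "v \<in> Out" unfolding Out_def using v by simp
      have "card (midpoints V A u v) < t + D"
        using card_midpoints_le_reverse[OF T 1] not_linked D unfolding linked_def by linarith
      then show ?thesis using outdeg_Out[OF \<open>v \<in> Out\<close>] \<open>v \<in> Out\<close> by simp
    next
      case 2
      then have "v \<in> In" unfolding In_def using v by simp
      have "card (midpoints V A v u) < t + D"
        using card_midpoints_le_reverse[OF T 2] not_linked D unfolding linked_def by linarith
      then show ?thesis using outdeg_In[OF \<open>v \<in> In\<close>] \<open>v \<in> In\<close> by simp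
    qed
  qed
  then have "card {v\<in>V. v \<noteq> u \<and> \<not> linked V A t u v}
      \<le> card ({v\<in>Out. outdeg Out B_Out v < t + D} \<union> {v\<in>In. outdeg In B_In v < t + D})"
    using fin unfolding Out_def In_def by (intro card_mono) auto
  also have "\<dots> \<le> card {v\<in>Out. outdeg Out B_Out v < t + D} + card {v\<in>In. outdeg In B_In v < t + D}"
    by (rule card_Un_le)
  also have "\<dots> \<le> 4 * (t + D)"
    using tournament_card_low_outdeg[OF T_Out, of "t + D"] tournament_card_low_outdeg[OF T_In, of "t + D"]
    by linarith
  finally show ?thesis unfolding D_def .
qed

lemma greedy_clique:
  fixes R :: "'a \<Rightarrow> 'a \<Rightarrow> bool"
  assumes fin: "finite V"
    and R_sym: "\<And>u v. R u v \<Longrightarrow> R v u"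
    and few_non_adjacent: "\<And>u. u \<in> V \<Longrightarrow> card {v\<in>V. v \<noteq> u \<and> \<not> R u v} \<le> b"
    and big: "(m - 1) * (b + 1) < card V"
  shows "\<exists>K\<subseteq>V. card K = m \<and> (\<forall>u\<in>K. \<forall>v\<in>K. u \<noteq> v \<longrightarrow> R u v)"
  using big
proof (induction m)
  case 0
  show ?case by (intro exI[of _ "{}"]) simp
next
  case (Suc m)
  from Suc.prems have small: "m * (b + 1) < card V" by simp
  have "(m - 1) * (b + 1) \<le> m * (b + 1)" by (intro mult_le_mono1) simp
  with small obtain K where K: "K \<subseteq> V" "card K = m"
    and clique: "\<forall>u\<in>K. \<forall>v\<in>K. u \<noteq> v \<longrightarrow> R u v"
    using Suc.IH by (meson le_less_trans)
  define N where "N u = insert u {v\<in>V. v \<noteq> u \<and> \<not> R u v}" for u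
  have finN: "finite (N u)" for u unfolding N_def using fin by simp
  have "card (\<Union>u\<in>K. N u) \<le> (\<Sum>u\<in>K. card (N u))"
    by (rule card_UN_le) (use K fin finite_subset in blast)
  also have "\<dots> \<le> (\<Sum>u\<in>K. b + 1)"
  proof (rule sum_mono)
    fix u assume "u \<in> K"
    then show "card (N u) \<le> b + 1"
      using few_non_adjacent[of u] K(1) fin unfolding N_def by (auto simp: card_insert_if)
  qed
  finally have "card (\<Union>u\<in>K. N u) < card V" using K(2) small by simp
  moreover have "finite (\<Union>u\<in>K. N u)" using K(1) fin finN finite_subset by blast
  ultimately have "\<not> V \<subseteq> (\<Union>u\<in>K. N u)" by (meson card_mono not_le)
  then obtain v where v: "v \<in> V" "v \<notin> (\<Union>u\<in>K. N u)" by blast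
  then have "v \<notin> K" "\<forall>u\<in>K. R u v" unfolding N_def by auto
  moreover have "finite K" using K(1) fin by (rule finite_subset)
  ultimately have "card (insert v K) = Suc m"
    and "\<forall>u\<in>insert v K. \<forall>w\<in>insert v K. u \<noteq> w \<longrightarrow> R u w"
    using K(2) clique R_sym by auto
  then show ?case using K(1) v(1) by (intro exI[of _ "insert v K"]) auto
qed

lemma greedy_distinct_representatives:
  assumes "finite P" "finite B"
    and large: "\<And>x. x \<in> P \<Longrightarrow> card B + card P \<le> card (S x)"
  shows "\<exists>g. inj_on g P \<and> (\<forall>x\<in>P. g x \<in> S x - B)"
  using assms(1) large
proof (induction P rule: finite_induct)
  case empty
  show ?case by simp
next
  case (insert x P)
  then have "card B + card P \<le> card (S y)" if "y \<in> P" for y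
    using that insert.prems insert.hyps by fastforce
  with insert.IH obtain g where g: "inj_on g P" "\<forall>y\<in>P. g y \<in> S y - B" by blast
  have "card (B \<union> g ` P) \<le> card B + card P"
    using card_Un_le[of B "g ` P"] card_image_le[OF insert.hyps(1), of g] by linarith
  also have "\<dots> < card (S x)"
    using insert.prems[of x] insert.hyps by simp
  finally have "\<not> S x \<subseteq> B \<union> g ` P"
    using assms(2) insert.hyps(1) by (meson card_mono finite_Un finite_imageI not_le)
  then obtain w where w: "w \<in> S x" "w \<notin> B \<union> g ` P" by blast
  have "inj_on (g(x := w)) (insert x P)"
    using g(1) w insert.hyps(2) by (auto simp: inj_on_def)
  moreover have "\<forall>y\<in>insert x P. (g(x := w)) y \<in> S y - B"
    using g(2) w insert.hyps(2) by auto
  ultimately show ?case by blast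
qed

lemma greedy_branch_budget:
  fixes k n D :: nat
  assumes k: "1 \<le> k" and D: "real D \<le> real n / (10 * real k) - real k ^ 2"
  shows "(k - 1) * (4 * (k * k + k + D) + 1) < n"
proof -
  have "10 * real k * (real D + real k ^ 2) \<le> real n"
    using D k by (simp add: field_simps)
  also have "10 * real k * (real D + real k ^ 2) = real (10 * (k * D) + 10 * (k * k * k))"
    by (simp add: algebra_simps power2_eq_square)
  finally have n: "10 * (k * D) + 10 * (k * k * k) \<le> n" by linarith
  have "(k - 1) * (4 * (k * k + k + D) + 1) < k * (4 * (k * k + k + D) + 1)"
    using k by (intro mult_strict_right_mono) auto
  also have "\<dots> = 4 * (k * k * k) + 4 * (k * k) + 4 * (k * D) + k"
    by (simp add: algebra_simps)
  also have "\<dots> \<le> 10 * (k * D) + 10 * (k * k * k)"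
  proof -
    have "k \<le> k * k * k" "k * k \<le> k * k * k" using k by simp_all
    then show ?thesis by linarith
  qed
  finally show ?thesis using n by linarith
qed

lemma contains_subdiv_complete_if_many_midpoints:
  assumes fin: "finite V" and K: "K \<subseteq> V" "card K = k"
    and many: "\<And>u v. u \<in> K \<Longrightarrow> v \<in> K \<Longrightarrow> u \<noteq> v \<Longrightarrow> k * k + k \<le> card (midpoints V A u v)"
  shows "contains_subdiv_complete V A k"
proof -
  have finK: "finite K" using K(1) fin by (rule finite_subset)
  obtain f where f: "bij_betw f {..<k} K"
    using ex_bij_betw_nat_finite[OF finK] K(2) by (auto simp: atLeast0LessThan)
  define P where "P = {(i, j). i < k \<and> j < k \<and> i \<noteq> j}"
  define S where "S = (\<lambda>(i, j). midpoints V A (f i) (f j))"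
  have P_sub: "P \<subseteq> {..<k} \<times> {..<k}" unfolding P_def by auto
  then have finP: "finite P" by (rule finite_subset) simp
  have "card P \<le> k * k"
    using card_mono[OF _ P_sub] by (simp add: card_cartesian_product)
  moreover have "k * k + k \<le> card (S x)" if "x \<in> P" for x
  proof -
    obtain i j where x: "x = (i, j)" "i < k" "j < k" "i \<noteq> j" using \<open>x \<in> P\<close> unfolding P_def by auto
    then have "f i \<noteq> f j" "f i \<in> K" "f j \<in> K"
      using f unfolding bij_betw_def inj_on_def by auto
    then show ?thesis unfolding S_def x using many by simp
  qed
  ultimately obtain g where g: "inj_on g P" "\<forall>x\<in>P. g x \<in> S x - K"
    using greedy_distinct_representatives[OF finP finK, of S] K(2) by fastforce
  have S_sub: "S x \<subseteq> V" for x
    unfolding S_def midpoints_def by (auto split: prod.split)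
  have "inj_on f {..<k}" "f ` {..<k} = K" using f by (simp_all add: bij_betw_def)
  moreover have "g ` P \<subseteq> V" using g(2) S_sub by blast
  moreover have "K \<inter> g ` P = {}" using g(2) by blast
  moreover have "\<forall>(i, j) \<in> P. A (f i) (g (i, j)) \<and> A (g (i, j)) (f j)"
    using g(2) unfolding S_def midpoints_def by auto
  ultimately show ?thesis
    unfolding contains_subdiv_complete_def Let_def P_def[symmetric] using K(1) g(1) by auto
qed

theorem theorem1p3:
  fixes V :: "'a set" and A :: "'a \<Rightarrow> 'a \<Rightarrow> bool" and k n :: nat
  assumes "tournament V A"
    and "card V = n"
    and "k \<ge> 1"
    and "real (max_outdeg V A) - real (min_outdeg V A) \<le> real n / (10 * real k) - real k ^ 2"
  shows "contains_subdiv_complete V A k"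
proof -
  have fin: "finite V" using assms(1) by (rule tournament_finite)
  define D where "D = max_outdeg V A - min_outdeg V A"
  define t where "t = k * k + k"
  have "real D \<le> real n / (10 * real k) - real k ^ 2"
    using assms(4) min_outdeg_le_max_outdeg[OF fin] unfolding D_def by (simp add: of_nat_diff)
  then have "(k - 1) * (4 * (t + D) + 1) < card V"
    using greedy_branch_budget[OF assms(3)] assms(2) unfolding t_def by (simp add: add.assoc)
  then obtain K where "K \<subseteq> V" "card K = k" "\<forall>u\<in>K. \<forall>v\<in>K. u \<noteq> v \<longrightarrow> linked V A t u v"
    using greedy_clique[OF fin linked_sym card_not_linked_le[OF assms(1)]] unfolding D_def by blast
  then show ?thesis
    using contains_subdiv_complete_if_many_midpoints[OF fin] unfolding linked_def t_def by blast
qed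

end
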